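(* Let $f\in\mathcal C$ and assume that $A=\sum_{\ell\in\mathbb Z_*}|c_f(\ell)|\,d(\ell)$ is finite. Then $$\sum_{d=1}^\infty\frac1d\Big|\tilde D_f(d)-f(1)+\sum_{\ell\in\mathbb Z}c_f(\ell)\Big|\le A.$$
   Context: $D_f(d)=\sum_{k=1}^d f(k/d)$ and $\tilde D_f(d)=D_f(d)-d\int_0^1f(x)dx$. $d(\ell)$ is the number of positive divisors of $|\ell|$. $\mathcal C$ is the class of functions $g\colon[0,1]\to\mathbb R$ such that for every rational $x\in(0,1)$, $g(x-0)=g(x+0)$ and $\int_0^\delta\frac{|g(x+u)+g(x-u)-2g(x)|}{u}du<\infty$ for some $\delta>0$. Functions are regarded as $1$-periodic and tacitly Lebesgue integrable on $[0,1]$, with Fourier coefficients $c_g(\ell)=\int_0^1g(x)e^{-2\pi i\ell x}dx$. $\mathbb Z_*=\mathbb Z\setminus\{0\}$. *)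

theory Defs
  imports "HOL-Analysis.Analysis"
begin

definition D_sum :: "(real \<Rightarrow> real) \<Rightarrow> nat \<Rightarrow> real" where
  "D_sum f d = (\<Sum>k=1..d. f (real k / real d))"

definition D_tilde :: "(real \<Rightarrow> real) \<Rightarrow> nat \<Rightarrow> real" where
  "D_tilde f d = D_sum f d - real d * (LINT x:{0..1}|lborel. f x)"

definition num_divisors :: "int \<Rightarrow> nat" where
  "num_divisors l = card {m::int. 0 < m \<and> m dvd \<bar>l\<bar>}"

definition fourier_coeff :: "(real \<Rightarrow> real) \<Rightarrow> int \<Rightarrow> complex" where
  "fourier_coeff g l =
     (LINT x:{0..1}|lborel. complex_of_real (g x) * exp (- 2 * pi * \<i> * of_int l * of_real x))"

definition class_C :: "(real \<Rightarrow> real) \<Rightarrow> bool" where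
  "class_C g \<longleftrightarrow>
     (\<forall>x\<in>\<rat>. 0 < x \<and> x < 1 \<longrightarrow>
        (\<exists>L. (g \<longlongrightarrow> L) (at_left x) \<and> (g \<longlongrightarrow> L) (at_right x)) \<and>
        (\<exists>\<delta>>0. \<delta> \<le> min x (1 - x) \<and>
           set_integrable lborel {0<..<\<delta>}
             (\<lambda>u. \<bar>g (x + u) + g (x - u) - 2 * g x\<bar> / u)))"

end

theory Submission
  imports Defs
begin

(* Absolute summability of c_f(l) d(l) implies that of c_f, so the Fourier series of f converges
   absolutely; by Fejer's theorem its sum at a continuity point x in (0,1) is f(x), and the Dini
   condition in class C rules out jumps at rational points. Summing the series at the points k/d
   and using that sum_{k=1..d} exp(2 pi i l k/d) is d or 0 according as d divides l or not gives
     D~_f(d) - f(1) + sum_l c_f(l) = d * sum_{l <> 0, d | l} c_f(l).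
   Dividing by d and summing over d counts every c_f(l) exactly d(l) times. *)

section \<open>Dirichlet and Fejer kernels\<close>

abbreviation circle_char :: "int \<Rightarrow> real \<Rightarrow> complex" where
  "circle_char l x \<equiv> exp (2 * pi * \<i> * of_int l * of_real x)"

lemma norm_circle_char [simp]: "norm (circle_char l x) = 1"
proof -
  have "2 * pi * \<i> * of_int l * of_real x = \<i> * complex_of_real (2 * pi * of_int l * x)"
    by simp
  then show ?thesis by (simp only: norm_exp_i_times)
qed

definition dirichlet_kernel :: "nat \<Rightarrow> real \<Rightarrow> real" where
  "dirichlet_kernel n t = 1 + 2 * (\<Sum>l=1..n. cos (2 * pi * real l * t))"

definition fejer_kernel :: "nat \<Rightarrow> real \<Rightarrow> real" where
  "fejer_kernel N t = (\<Sum>n\<le>N. dirichlet_kernel n t) / real (Suc N)"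

lemma continuous_on_dirichlet_kernel [continuous_intros]:
  fixes g :: "'a::t2_space \<Rightarrow> real"
  assumes "continuous_on A g"
  shows "continuous_on A (\<lambda>y. dirichlet_kernel n (g y))"
  unfolding dirichlet_kernel_def using assms by (auto intro!: continuous_intros)

lemma continuous_on_fejer_kernel [continuous_intros]:
  fixes g :: "'a::t2_space \<Rightarrow> real"
  assumes "continuous_on A g"
  shows "continuous_on A (\<lambda>y. fejer_kernel N (g y))"
  unfolding fejer_kernel_def using assms by (auto intro!: continuous_intros)

lemma sum_circle_char_eq_dirichlet_kernel:
  "(\<Sum>l\<in>{-int n..int n}. circle_char l t) = complex_of_real (dirichlet_kernel n t)"
proof (induction n)
  case 0
  then show ?case by (simp add: dirichlet_kernel_def)
next
  case (Suc n)
  have "{-int (Suc n)..int (Suc n)} = insert (-int (Suc n)) (insert (int (Suc n)) {-int n..int n})"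
    by auto
  then have "(\<Sum>l\<in>{-int (Suc n)..int (Suc n)}. circle_char l t)
      = circle_char (- int (Suc n)) t + circle_char (int (Suc n)) t + (\<Sum>l\<in>{-int n..int n}. circle_char l t)"
    by simp
  also have "circle_char (- int (Suc n)) t + circle_char (int (Suc n)) t
      = complex_of_real (2 * cos (2 * pi * real (Suc n) * t))"
    by (simp add: cos_exp_eq algebra_simps flip: cos_of_real)
  finally show ?case
    using Suc by (simp add: dirichlet_kernel_def)
qed

lemma dirichlet_kernel_mult_sin:
  "dirichlet_kernel n t * sin (pi * t) = sin ((2 * real n + 1) * pi * t)"
proof (induction n)
  case 0
  then show ?case by (simp add: dirichlet_kernel_def)
next
  case (Suc n)
  have "dirichlet_kernel (Suc n) t * sin (pi * t)
      = sin ((2 * real n + 1) * pi * t) + 2 * cos (2 * pi * real (Suc n) * t) * sin (pi * t)"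
    using Suc by (simp add: dirichlet_kernel_def algebra_simps)
  also have "2 * cos (2 * pi * real (Suc n) * t) * sin (pi * t)
      = sin (2 * pi * real (Suc n) * t + pi * t) - sin (2 * pi * real (Suc n) * t - pi * t)"
    by (simp add: sin_add sin_diff)
  also have "\<dots> = sin ((2 * real (Suc n) + 1) * pi * t) - sin ((2 * real n + 1) * pi * t)"
    by (simp add: algebra_simps)
  finally show ?case by simp
qed

lemma sin_squared_diff: "sin (a::real) ^ 2 - sin b ^ 2 = sin (a + b) * sin (a - b)"
proof -
  have "sin (a + b) * sin (a - b) = sin a ^ 2 * cos b ^ 2 - cos a ^ 2 * sin b ^ 2"
    unfolding sin_add sin_diff by (simp add: power2_eq_square algebra_simps)
  also have "\<dots> = sin a ^ 2 * (1 - sin b ^ 2) - (1 - sin a ^ 2) * sin b ^ 2"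
    by (simp add: cos_squared_eq)
  finally show ?thesis by (simp add: algebra_simps)
qed

lemma sum_dirichlet_kernel_mult_sin_squared:
  "(\<Sum>n\<le>N. dirichlet_kernel n t) * sin (pi * t) ^ 2 = sin (real (Suc N) * pi * t) ^ 2"
proof (induction N)
  case 0
  then show ?case by (simp add: dirichlet_kernel_def)
next
  case (Suc N)
  have "(\<Sum>n\<le>Suc N. dirichlet_kernel n t) * sin (pi * t) ^ 2
      = sin (real (Suc N) * pi * t) ^ 2 + dirichlet_kernel (Suc N) t * sin (pi * t) * sin (pi * t)"
    using Suc by (simp add: algebra_simps power2_eq_square)
  also have "dirichlet_kernel (Suc N) t * sin (pi * t) * sin (pi * t)
      = sin (real (Suc (Suc N)) * pi * t) ^ 2 - sin (real (Suc N) * pi * t) ^ 2"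
    by (simp only: dirichlet_kernel_mult_sin sin_squared_diff) (simp add: algebra_simps)
  finally show ?case by simp
qed

lemma fejer_kernel_eq:
  assumes "sin (pi * t) \<noteq> 0"
  shows "fejer_kernel N t = sin (real (Suc N) * pi * t) ^ 2 / (real (Suc N) * sin (pi * t) ^ 2)"
proof -
  have "(\<Sum>n\<le>N. dirichlet_kernel n t) = sin (real (Suc N) * pi * t) ^ 2 / sin (pi * t) ^ 2"
    using sum_dirichlet_kernel_mult_sin_squared[where N=N and t=t] assms
    by (simp add: eq_divide_eq)
  then show ?thesis by (simp add: fejer_kernel_def)
qed

lemma fejer_kernel_nonneg: "fejer_kernel N t \<ge> 0"
proof (cases "sin (pi * t) = 0")
  case True
  then obtain i :: int where "t = of_int i"
    by (auto simp: sin_zero_iff_int2)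
  then have "cos (2 * pi * real l * t) = 1" for l
    by (metis cos_int_2pin mult.assoc of_int_mult of_int_of_nat_eq)
  then show ?thesis by (simp add: fejer_kernel_def dirichlet_kernel_def sum_nonneg)
qed (simp add: fejer_kernel_eq)

lemma fejer_kernel_le:
  assumes "sin (pi * t) \<noteq> 0"
  shows "fejer_kernel N t \<le> 1 / (real (Suc N) * sin (pi * t) ^ 2)"
  using assms by (simp add: fejer_kernel_eq divide_right_mono abs_square_le_1)

lemma sin_pi_le_abs_sin_pi:
  assumes "0 < \<delta>" "\<delta> \<le> \<bar>t\<bar>" "\<bar>t\<bar> \<le> 1 - \<delta>"
  shows "sin (pi * \<delta>) \<le> \<bar>sin (pi * t)\<bar>"
proof -
  have "0 < pi * \<delta>"
    using assms by simp
  then have lower: "- (pi / 2) \<le> pi * \<delta>"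
    using pi_gt_zero by linarith
  have abs_eq: "\<bar>sin (pi * t)\<bar> = sin (pi * \<bar>t\<bar>)"
  proof -
    have "0 \<le> sin (pi * \<bar>t\<bar>)"
      using assms by (intro sin_ge_zero) auto
    then show ?thesis
      by (cases "t \<ge> 0") auto
  qed
  show ?thesis
  proof (cases "\<bar>t\<bar> \<le> 1/2")
    case True
    then show ?thesis
      unfolding abs_eq using assms lower by (intro sin_monotone_2pi_le) (auto simp: mult_left_mono)
  next
    case False
    have "sin (pi * \<delta>) \<le> sin (pi * (1 - \<bar>t\<bar>))"
      using assms lower False by (intro sin_monotone_2pi_le) (auto simp: mult_left_mono)
    also have "sin (pi * (1 - \<bar>t\<bar>)) = sin (pi * \<bar>t\<bar>)"
      by (simp add: right_diff_distrib)
    finally show ?thesis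
      unfolding abs_eq .
  qed
qed

lemma fejer_kernel_le_away:
  assumes "0 < \<delta>" "\<delta> \<le> \<bar>t\<bar>" "\<bar>t\<bar> \<le> 1 - \<delta>"
  shows "fejer_kernel N t \<le> 1 / (real (Suc N) * sin (pi * \<delta>) ^ 2)"
proof -
  have pos: "0 < sin (pi * \<delta>)"
    using assms by (intro sin_gt_zero) auto
  have "sin (pi * \<delta>) \<le> \<bar>sin (pi * t)\<bar>"
    using assms by (rule sin_pi_le_abs_sin_pi)
  then have le: "sin (pi * \<delta>) ^ 2 \<le> sin (pi * t) ^ 2"
    using pos power_mono[of "sin (pi * \<delta>)" "\<bar>sin (pi * t)\<bar>" 2] by simp
  then have "sin (pi * t) \<noteq> 0"
    using pos by auto
  then have "fejer_kernel N t \<le> 1 / (real (Suc N) * sin (pi * t) ^ 2)"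
    by (rule fejer_kernel_le)
  also have "\<dots> \<le> 1 / (real (Suc N) * sin (pi * \<delta>) ^ 2)"
    using pos le by (intro divide_left_mono mult_left_mono mult_pos_pos) auto
  finally show ?thesis .
qed

section \<open>Fejer's theorem\<close>

lemma set_integral_sum:
  fixes g :: "'i \<Rightarrow> 'a \<Rightarrow> 'b::{banach, second_countable_topology}"
  assumes "\<And>i. i \<in> I \<Longrightarrow> set_integrable M A (g i)"
  shows "(LINT x:A|M. (\<Sum>i\<in>I. g i x)) = (\<Sum>i\<in>I. LINT x:A|M. g i x)"
  using assms unfolding set_lebesgue_integral_def set_integrable_def
  by (simp add: scaleR_sum_right integral_sum)

lemma set_integrable_sum:
  fixes g :: "'i \<Rightarrow> 'a \<Rightarrow> 'b::{banach, second_countable_topology}"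
  assumes "\<And>i. i \<in> I \<Longrightarrow> set_integrable M A (g i)"
  shows "set_integrable M A (\<lambda>x. \<Sum>i\<in>I. g i x)"
  using assms unfolding set_integrable_def by (simp add: scaleR_sum_right)

lemma set_integrable_mult_continuous:
  fixes g :: "real \<Rightarrow> 'a::{real_normed_field, second_countable_topology, banach}"
  assumes f: "set_integrable lborel {a..b} f" and g: "continuous_on {a..b} g"
  shows "set_integrable lborel {a..b} (\<lambda>y. of_real (f y) * g y)"
proof -
  obtain B where B: "\<And>y. y \<in> {a..b} \<Longrightarrow> norm (g y) \<le> B"
    using continuous_on_compact_bound[OF compact_Icc g] by blast
  have "set_integrable lborel {a..b} (\<lambda>y. B * f y)"
    using f by simp
  moreover have "set_borel_measurable lborel {a..b} (\<lambda>y. of_real (f y) * g y)"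
  proof -
    have "(\<lambda>y. indicator {a..b} y *\<^sub>R f y) \<in> borel_measurable lborel"
      using f unfolding set_integrable_def by (rule borel_measurable_integrable)
    moreover have "(\<lambda>y. indicator {a..b} y *\<^sub>R g y) \<in> borel_measurable lborel"
      using borel_measurable_continuous_on_indicator[OF _ g] by simp
    ultimately have "(\<lambda>y. of_real (indicator {a..b} y *\<^sub>R f y) * (indicator {a..b} y *\<^sub>R g y))
        \<in> borel_measurable lborel"
      by measurable
    then show ?thesis
      unfolding set_borel_measurable_def
      by (rule measurable_cong[THEN iffD1, rotated]) (auto simp: indicator_def)
  qed
  moreover have "AE y in lborel. y \<in> {a..b} \<longrightarrow> norm (of_real (f y) * g y) \<le> norm (B * f y)"
  proof (intro AE_I2 impI)
    fix y assume "y \<in> {a..b}"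
    then have "norm (of_real (f y) * g y) \<le> \<bar>f y\<bar> * B"
      using B by (simp add: norm_mult mult_left_mono)
    also have "\<dots> \<le> norm (B * f y)"
      by (simp add: abs_mult mult.commute mult_right_mono)
    finally show "norm (of_real (f y) * g y) \<le> norm (B * f y)" .
  qed
  ultimately show ?thesis
    by (rule set_integrable_bound)
qed

lemma set_integrable_mult_continuous_real:
  fixes f g :: "real \<Rightarrow> real"
  assumes "set_integrable lborel {a..b} f" and "continuous_on {a..b} g"
  shows "set_integrable lborel {a..b} (\<lambda>y. f y * g y)"
  using set_integrable_mult_continuous[where 'a=real, OF assms] by simp

lemma integral_cos_eq_0:
  assumes "l \<ge> 1"
  shows "(LINT y:{0..1}|lborel. cos (2 * pi * real l * (x - y))) = 0"
proof -
  define F where "F y = - sin (2 * pi * real l * (x - y)) / (2 * pi * real l)" for y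
  have "(LINT y:{0..1}|lborel. cos (2 * pi * real l * (x - y))) = F 1 - F 0"
    unfolding set_lebesgue_integral_def
  proof (rule integral_FTC_atLeastAtMost)
    fix y
    have "(F has_real_derivative cos (2 * pi * real l * (x - y))) (at y within {0..1})"
      unfolding F_def using assms by (auto intro!: derivative_eq_intros)
    then show "(F has_vector_derivative cos (2 * pi * real l * (x - y))) (at y within {0..1})"
      by (simp add: has_real_derivative_iff_has_vector_derivative)
  qed (auto intro!: continuous_intros)
  also have "F 1 = F 0"
  proof -
    have "sin (2 * pi * real l * (x - 1)) = sin (2 * pi * real l * x - 2 * pi * real l)"
      by (simp add: algebra_simps)
    also have "\<dots> = sin (2 * pi * real l * x)"
      by (simp add: sin_diff sin_integer_2pi cos_integer_2pi)
    finally show ?thesis by (simp add: F_def)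
  qed
  finally show ?thesis by simp
qed

lemma integral_dirichlet_kernel: "(LINT y:{0..1}|lborel. dirichlet_kernel n (x - y)) = 1"
proof -
  have cos_int: "set_integrable lborel {0..1} (\<lambda>y. cos (2 * pi * real l * (x - y)))" for l
    by (rule borel_integrable_atLeastAtMost') (intro continuous_intros)
  have one: "set_integrable lborel {0..1} (\<lambda>y::real. 1::real)"
    by (rule borel_integrable_atLeastAtMost') (intro continuous_intros)
  have "(LINT y:{0..1}|lborel. dirichlet_kernel n (x - y))
      = (LINT y:{0..1}|lborel. 1 + 2 * (\<Sum>l=1..n. cos (2 * pi * real l * (x - y))))"
    by (simp add: dirichlet_kernel_def)
  also have "\<dots> = (LINT y:{0..1::real}|lborel. 1)
      + 2 * (\<Sum>l=1..n. LINT y:{0..1}|lborel. cos (2 * pi * real l * (x - y)))"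
    by (subst set_integral_add(2))
      (auto intro!: set_integrable_sum cos_int one simp: set_integral_sum[OF cos_int])
  also have "\<dots> = 1"
    by (simp add: integral_cos_eq_0 set_integral_const)
  finally show ?thesis .
qed

lemma integral_fejer_kernel: "(LINT y:{0..1}|lborel. fejer_kernel N (x - y)) = 1"
proof -
  have "set_integrable lborel {0..1} (\<lambda>y. dirichlet_kernel n (x - y))" for n
    by (rule borel_integrable_atLeastAtMost') (intro continuous_intros)
  then show ?thesis
    by (simp add: fejer_kernel_def set_integral_sum integral_dirichlet_kernel)
qed

lemma fourier_coeff_mult_circle_char:
  "fourier_coeff f l * circle_char l x
     = (LINT y:{0..1}|lborel. complex_of_real (f y) * circle_char l (x - y))"
proof -
  have shift: "complex_of_real (f y) * exp (- 2 * pi * \<i> * of_int l * of_real y) * circle_char l x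
      = complex_of_real (f y) * circle_char l (x - y)" for y
    by (simp add: mult.assoc flip: exp_add) (simp add: algebra_simps)
  have "fourier_coeff f l * circle_char l x
      = (LINT y:{0..1}|lborel. complex_of_real (f y) * exp (- 2 * pi * \<i> * of_int l * of_real y) * circle_char l x)"
    unfolding fourier_coeff_def by simp
  also have "\<dots> = (LINT y:{0..1}|lborel. complex_of_real (f y) * circle_char l (x - y))"
    by (simp only: shift)
  finally show ?thesis .
qed

lemma fourier_partial_sum_eq_convolution:
  assumes f: "set_integrable lborel {0..1} f"
  shows "(\<Sum>l\<in>{-int n..int n}. fourier_coeff f l * circle_char l x)
     = complex_of_real (LINT y:{0..1}|lborel. f y * dirichlet_kernel n (x - y))"
proof -
  have "set_integrable lborel {0..1} (\<lambda>y. complex_of_real (f y) * circle_char l (x - y))" for l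
    by (rule set_integrable_mult_continuous[OF f]) (intro continuous_intros)
  then have "(\<Sum>l\<in>{-int n..int n}. fourier_coeff f l * circle_char l x)
      = (LINT y:{0..1}|lborel. complex_of_real (f y) * (\<Sum>l\<in>{-int n..int n}. circle_char l (x - y)))"
    unfolding fourier_coeff_mult_circle_char sum_distrib_left by (rule set_integral_sum[symmetric])
  also have "\<dots> = (LINT y:{0..1}|lborel. complex_of_real (f y * dirichlet_kernel n (x - y)))"
    unfolding sum_circle_char_eq_dirichlet_kernel by simp
  also have "\<dots> = complex_of_real (LINT y:{0..1}|lborel. f y * dirichlet_kernel n (x - y))"
    by (rule set_integral_complex_of_real)
  finally show ?thesis .
qed

lemma fejer_mean_eq_convolution:
  assumes f: "set_integrable lborel {0..1} f"
  shows "(\<Sum>n\<le>N. \<Sum>l\<in>{-int n..int n}. fourier_coeff f l * circle_char l x) / of_nat (Suc N)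
     = complex_of_real (LINT y:{0..1}|lborel. f y * fejer_kernel N (x - y))"
proof -
  have "set_integrable lborel {0..1} (\<lambda>y. f y * dirichlet_kernel n (x - y))" for n
    by (rule set_integrable_mult_continuous_real[OF f]) (intro continuous_intros)
  then show ?thesis
    unfolding fourier_partial_sum_eq_convolution[OF f]
    by (simp add: fejer_kernel_def set_integral_sum sum_distrib_left flip: sum_divide_distrib)
qed

lemma abs_mult_fejer_kernel_le:
  assumes "0 < \<delta>" "\<delta> \<le> x" "\<delta> \<le> 1 - x" "y \<in> {0..1}" "0 \<le> \<epsilon>"
    and near: "\<bar>x - y\<bar> < \<delta> \<Longrightarrow> \<bar>v\<bar> \<le> \<epsilon>"
  shows "\<bar>v * fejer_kernel N (x - y)\<bar>
           \<le> \<epsilon> * fejer_kernel N (x - y) + \<bar>v\<bar> / (real (Suc N) * sin (pi * \<delta>) ^ 2)"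
proof (cases "\<bar>x - y\<bar> < \<delta>")
  case True
  then have "\<bar>v * fejer_kernel N (x - y)\<bar> \<le> \<epsilon> * fejer_kernel N (x - y)"
    using near by (simp add: abs_mult fejer_kernel_nonneg mult_right_mono)
  moreover have "0 \<le> \<bar>v\<bar> / (real (Suc N) * sin (pi * \<delta>) ^ 2)"
    by simp
  ultimately show ?thesis
    by linarith
next
  case False
  then have "fejer_kernel N (x - y) \<le> 1 / (real (Suc N) * sin (pi * \<delta>) ^ 2)"
    using assms by (intro fejer_kernel_le_away) auto
  then have "\<bar>v\<bar> * fejer_kernel N (x - y) \<le> \<bar>v\<bar> * (1 / (real (Suc N) * sin (pi * \<delta>) ^ 2))"
    by (rule mult_left_mono) simp
  then have "\<bar>v * fejer_kernel N (x - y)\<bar> \<le> \<bar>v\<bar> / (real (Suc N) * sin (pi * \<delta>) ^ 2)"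
    by (simp add: abs_mult fejer_kernel_nonneg)
  moreover have "0 \<le> \<epsilon> * fejer_kernel N (x - y)"
    using assms by (simp add: fejer_kernel_nonneg)
  ultimately show ?thesis
    by simp
qed

lemma fejer_mean_error_le:
  fixes f :: "real \<Rightarrow> real"
  assumes f: "set_integrable lborel {0..1} f"
    and \<delta>: "0 < \<delta>" "\<delta> \<le> x" "\<delta> \<le> 1 - x"
    and near: "\<And>y. y \<in> {0..1} \<Longrightarrow> \<bar>x - y\<bar> < \<delta> \<Longrightarrow> \<bar>f y - f x\<bar> \<le> \<epsilon>"
  shows "\<bar>(LINT y:{0..1}|lborel. f y * fejer_kernel N (x - y)) - f x\<bar>
           \<le> \<epsilon> + (LINT y:{0..1}|lborel. \<bar>f y - f x\<bar>) / (real (Suc N) * sin (pi * \<delta>) ^ 2)"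
proof -
  define C where "C = real (Suc N) * sin (pi * \<delta>) ^ 2"
  have "0 \<le> \<epsilon>"
    using near[of x] \<delta> by simp
  have F: "set_integrable lborel {0..1} (\<lambda>y. fejer_kernel N (x - y))"
    by (rule borel_integrable_atLeastAtMost') (intro continuous_intros)
  have f_dev: "set_integrable lborel {0..1} (\<lambda>y. \<bar>f y - f x\<bar>)"
    by (intro set_integrable_abs set_integral_diff(1) f borel_integrable_atLeastAtMost'
        continuous_intros)
  have f_F: "set_integrable lborel {0..1} (\<lambda>y. f y * fejer_kernel N (x - y))"
    by (rule set_integrable_mult_continuous_real[OF f]) (intro continuous_intros)
  have dev_F: "set_integrable lborel {0..1} (\<lambda>y. (f y - f x) * fejer_kernel N (x - y))"
    using set_integral_diff(1)[OF f_F set_integrable_mult_right[OF F, of "f x"]]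
    by (simp add: left_diff_distrib)
  have pointwise: "\<bar>(f y - f x) * fejer_kernel N (x - y)\<bar>
      \<le> \<epsilon> * fejer_kernel N (x - y) + \<bar>f y - f x\<bar> / C"
    if "y \<in> {0..1}" for y
    unfolding C_def using \<delta> that near \<open>0 \<le> \<epsilon>\<close> by (intro abs_mult_fejer_kernel_le) auto
  have "(LINT y:{0..1}|lborel. f y * fejer_kernel N (x - y)) - f x
      = (LINT y:{0..1}|lborel. (f y - f x) * fejer_kernel N (x - y))"
    using set_integral_diff(2)[OF f_F set_integrable_mult_right[OF F, of "f x"]]
    by (simp add: integral_fejer_kernel left_diff_distrib)
  also have "\<bar>\<dots>\<bar> \<le> (LINT y:{0..1}|lborel. \<bar>(f y - f x) * fejer_kernel N (x - y)\<bar>)"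
    using set_integral_norm_bound[OF dev_F] by simp
  also have "\<dots> \<le> (LINT y:{0..1}|lborel. \<epsilon> * fejer_kernel N (x - y) + \<bar>f y - f x\<bar> / C)"
    using dev_F F f_dev pointwise
    by (intro set_integral_mono set_integrable_abs set_integral_add(1)) auto
  also have "\<dots> = \<epsilon> + (LINT y:{0..1}|lborel. \<bar>f y - f x\<bar>) / C"
    using F f_dev by (simp add: set_integral_add(2) integral_fejer_kernel)
  finally show ?thesis
    unfolding C_def .
qed

theorem fejer_mean_tendsto:
  fixes f :: "real \<Rightarrow> real"
  assumes f: "set_integrable lborel {0..1} f" and x: "0 < x" "x < 1" and cont: "isCont f x"
  shows "(\<lambda>N. LINT y:{0..1}|lborel. f y * fejer_kernel N (x - y)) \<longlonglongrightarrow> f x"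
proof (rule tendstoI)
  fix e :: real
  assume "0 < e"
  then obtain \<eta> where "0 < \<eta>" and \<eta>: "\<And>y. dist y x < \<eta> \<Longrightarrow> dist (f y) (f x) < e / 2"
    using cont unfolding continuous_at_eps_delta by (meson half_gt_zero)
  define \<delta> where "\<delta> = min \<eta> (min x (1 - x))"
  define c where "c = (LINT y:{0..1}|lborel. \<bar>f y - f x\<bar>) / sin (pi * \<delta>) ^ 2"
  have "(\<lambda>N. c / real (Suc N)) \<longlonglongrightarrow> 0"
    by (rule LIMSEQ_Suc[OF lim_const_over_n])
  then have "eventually (\<lambda>N. c / real (Suc N) < e / 2) sequentially"
    using \<open>0 < e\<close> by (intro order_tendstoD) auto
  then show "eventually (\<lambda>N. dist (LINT y:{0..1}|lborel. f y * fejer_kernel N (x - y)) (f x) < e)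
      sequentially"
  proof eventually_elim
    case (elim N)
    have "\<bar>(LINT y:{0..1}|lborel. f y * fejer_kernel N (x - y)) - f x\<bar>
        \<le> e / 2 + (LINT y:{0..1}|lborel. \<bar>f y - f x\<bar>) / (real (Suc N) * sin (pi * \<delta>) ^ 2)"
    proof (rule fejer_mean_error_le[OF f])
      show "0 < \<delta>" "\<delta> \<le> x" "\<delta> \<le> 1 - x"
        using \<open>0 < \<eta>\<close> x by (auto simp: \<delta>_def)
      show "\<bar>f y - f x\<bar> \<le> e / 2" if "\<bar>x - y\<bar> < \<delta>" for y
        using \<eta>[of y] that by (simp add: \<delta>_def dist_real_def abs_minus_commute)
    qed
    also have "\<dots> = e / 2 + c / real (Suc N)"
      by (simp add: c_def)
    finally show ?case
      using elim unfolding dist_real_def by linarith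
  qed
qed

section \<open>Absolutely convergent Fourier series\<close>

lemma norm_sum_atMost_le_head_tail:
  fixes b :: "nat \<Rightarrow> 'a::real_normed_vector"
  assumes "M \<le> N" and tail: "\<And>n. M \<le> n \<Longrightarrow> norm (b n) \<le> r"
  shows "norm (\<Sum>n\<le>N. b n) \<le> (\<Sum>n<M. norm (b n)) + real (Suc N) * r"
proof -
  have "{..N} = {..<M} \<union> {M..N}"
    using assms(1) by auto
  then have "(\<Sum>n\<le>N. norm (b n)) = (\<Sum>n<M. norm (b n)) + (\<Sum>n\<in>{M..N}. norm (b n))"
    by (simp only:) (rule sum.union_disjoint, auto)
  also have "(\<Sum>n\<in>{M..N}. norm (b n)) \<le> (\<Sum>n\<in>{M..N}. r)"
    using tail by (intro sum_mono) auto
  also have "\<dots> \<le> real (Suc N) * r"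
  proof -
    have "0 \<le> r"
      using tail[of M] norm_ge_zero[of "b M"] by linarith
    then show ?thesis
      by (simp add: mult_right_mono)
  qed
  finally show ?thesis
    using norm_sum[of b "{..N}"] by simp
qed

lemma cesaro_mean_tendsto:
  fixes a :: "nat \<Rightarrow> 'a::real_normed_field"
  assumes "a \<longlonglongrightarrow> L"
  shows "(\<lambda>N. (\<Sum>n\<le>N. a n) / of_nat (Suc N)) \<longlonglongrightarrow> L"
proof (rule tendstoI)
  fix e :: real
  assume "0 < e"
  then obtain M where M: "\<And>n. n \<ge> M \<Longrightarrow> norm (a n - L) < e / 2"
    using LIMSEQ_D[OF assms, of "e / 2"] by auto
  define B where "B = (\<Sum>n<M. norm (a n - L))"
  have "(\<lambda>N. B / real (Suc N)) \<longlonglongrightarrow> 0"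
    by (rule LIMSEQ_Suc[OF lim_const_over_n])
  then have "eventually (\<lambda>N. B / real (Suc N) < e / 2) sequentially"
    using \<open>0 < e\<close> by (intro order_tendstoD) auto
  with eventually_ge_at_top[of M]
  show "eventually (\<lambda>N. dist ((\<Sum>n\<le>N. a n) / of_nat (Suc N)) L < e) sequentially"
  proof eventually_elim
    case (elim N)
    have "(\<Sum>n\<le>N. a n) / of_nat (Suc N) - L = (\<Sum>n\<le>N. a n - L) / of_nat (Suc N)"
      by (simp add: sum_subtractf diff_divide_distrib del: of_nat_Suc)
    then have "dist ((\<Sum>n\<le>N. a n) / of_nat (Suc N)) L = norm (\<Sum>n\<le>N. a n - L) / real (Suc N)"
      by (metis dist_norm norm_divide norm_of_nat)
    also have "\<dots> \<le> (B + real (Suc N) * (e / 2)) / real (Suc N)"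
      unfolding B_def using elim M
      by (intro divide_right_mono norm_sum_atMost_le_head_tail) (auto intro: less_imp_le)
    also have "\<dots> = B / real (Suc N) + e / 2"
      by (simp add: add_divide_distrib del: of_nat_Suc)
    also have "\<dots> < e"
      using elim by linarith
    finally show ?case .
  qed
qed

lemma has_sum_imp_symmetric_partial_sums_tendsto:
  fixes g :: "int \<Rightarrow> 'a::topological_comm_monoid_add"
  assumes "(g has_sum S) UNIV"
  shows "(\<lambda>n. \<Sum>l\<in>{-int n..int n}. g l) \<longlonglongrightarrow> S"
proof -
  have "filterlim (\<lambda>n. {-int n..int n}) (finite_subsets_at_top UNIV) sequentially"
    unfolding filterlim_finite_subsets_at_top
  proof (intro allI impI)
    fix X :: "int set"
    assume "finite X \<and> X \<subseteq> UNIV"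
    then obtain b where b: "\<And>x. x \<in> X \<Longrightarrow> \<bar>x\<bar> \<le> b"
      using bdd_above_finite[of "abs ` X"] by (auto simp: bdd_above_def)
    show "eventually (\<lambda>n. finite {-int n..int n} \<and> X \<subseteq> {-int n..int n} \<and> {-int n..int n} \<subseteq> UNIV)
        sequentially"
      using eventually_ge_at_top[of "nat b"]
    proof eventually_elim
      case (elim n)
      then show ?case
        using b by force
    qed
  qed
  from filterlim_compose[OF assms[unfolded has_sum_def] this] show ?thesis
    by simp
qed

theorem fourier_series_has_sum_at_isCont:
  fixes f :: "real \<Rightarrow> real"
  assumes f: "set_integrable lborel {0..1} f" and x: "0 < x" "x < 1" and cont: "isCont f x"
    and abs_summable: "(\<lambda>l. norm (fourier_coeff f l)) summable_on UNIV"
  shows "((\<lambda>l. fourier_coeff f l * circle_char l x) has_sum complex_of_real (f x)) UNIV"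
proof -
  define g where "g l = fourier_coeff f l * circle_char l x" for l
  have "g summable_on UNIV"
  proof (rule abs_summable_summable)
    show "(\<lambda>l. norm (g l)) summable_on UNIV"
      using abs_summable by (simp add: g_def norm_mult)
  qed
  then have series: "(g has_sum infsum g UNIV) UNIV"
    by (rule has_sum_infsum)
  have "(\<lambda>N. (\<Sum>n\<le>N. \<Sum>l\<in>{-int n..int n}. g l) / of_nat (Suc N)) \<longlonglongrightarrow> infsum g UNIV"
    by (intro cesaro_mean_tendsto has_sum_imp_symmetric_partial_sums_tendsto series)
  moreover have "(\<lambda>N. (\<Sum>n\<le>N. \<Sum>l\<in>{-int n..int n}. g l) / of_nat (Suc N)) \<longlonglongrightarrow> complex_of_real (f x)"
    unfolding g_def fejer_mean_eq_convolution[OF f]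
    by (intro tendsto_of_real fejer_mean_tendsto[OF f x cont])
  ultimately have "infsum g UNIV = complex_of_real (f x)"
    by (rule LIMSEQ_unique)
  with series show ?thesis
    unfolding g_def[abs_def] by simp
qed

section \<open>Continuity at rational points\<close>

lemma set_integral_const_divide_Icc:
  fixes c e b :: real
  assumes "0 < e" "e \<le> b"
  shows "(LINT u:{e..b}|lborel. c / u) = c * (ln b - ln e)"
proof -
  have "(LINT u:{e..b}|lborel. c / u) = c * ln b - c * ln e"
    unfolding set_lebesgue_integral_def
  proof (rule integral_FTC_atLeastAtMost[where F = "\<lambda>u. c * ln u"])
    fix u
    assume "e \<le> u" "u \<le> b"
    then have "((\<lambda>u. c * ln u) has_real_derivative c * (1 / u)) (at u within {e..b})"
      using assms by (auto intro!: derivative_eq_intros)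
    then show "((\<lambda>u. c * ln u) has_vector_derivative c / u) (at u within {e..b})"
      by (simp add: has_real_derivative_iff_has_vector_derivative)
  qed (use assms in \<open>auto intro!: continuous_intros\<close>)
  then show ?thesis
    by (simp add: right_diff_distrib)
qed

lemma not_set_integrable_const_divide:
  assumes "0 < a" "0 < c"
  shows "\<not> set_integrable lborel {0<..<a} (\<lambda>u::real. c / u)"
proof
  assume int: "set_integrable lborel {0<..<a} (\<lambda>u::real. c / u)"
  define J where "J = (LINT u:{0<..<a}|lborel. c / u)"
  define b where "b = a / 2"
  have "0 < b" "b < a"
    using assms by (auto simp: b_def)
  have lower: "c * (ln b - ln e) \<le> J" if "0 < e" "e \<le> b" for e
  proof -
    have "{e..b} \<subseteq> {0<..<a}"
      using that \<open>b < a\<close> by auto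
    have "(LINT u:{e..b}|lborel. c / u) \<le> J"
      unfolding J_def set_lebesgue_integral_def
    proof (rule integral_mono)
      show "integrable lborel (\<lambda>u. indicator {e..b} u *\<^sub>R (c / u))"
        using set_integrable_subset[OF int _ \<open>{e..b} \<subseteq> {0<..<a}\<close>]
        unfolding set_integrable_def by simp
      show "integrable lborel (\<lambda>u. indicator {0<..<a} u *\<^sub>R (c / u))"
        using int unfolding set_integrable_def .
    qed (use that assms \<open>{e..b} \<subseteq> {0<..<a}\<close> in \<open>auto simp: indicator_def\<close>)
    then show ?thesis
      using set_integral_const_divide_Icc[OF that] by simp
  qed
  from lower[of b] have "0 \<le> J / c"
    using \<open>0 < b\<close> assms by simp
  define e where "e = b * exp (- (J / c) - 1)"
  have "0 < e" "e \<le> b"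
    using \<open>0 < b\<close> \<open>0 \<le> J / c\<close> by (auto simp: e_def mult_le_cancel_left1)
  moreover have "c * (ln b - ln e) = J + c"
    using \<open>0 < b\<close> assms by (simp add: e_def ln_mult field_simps)
  ultimately show False
    using lower assms by fastforce
qed

lemma dini_condition_imp_no_jump:
  fixes f :: "real \<Rightarrow> real"
  assumes left: "(f \<longlongrightarrow> L) (at_left x)" and right: "(f \<longlongrightarrow> L) (at_right x)"
    and "0 < \<delta>"
    and dini: "set_integrable lborel {0<..<\<delta>} (\<lambda>u. \<bar>f (x + u) + f (x - u) - 2 * f x\<bar> / u)"
  shows "f x = L"
proof (rule ccontr)
  assume "f x \<noteq> L"
  define c where "c = \<bar>L - f x\<bar>"
  have "0 < c"
    using \<open>f x \<noteq> L\<close> by (simp add: c_def)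
  have "((\<lambda>u. f (x + u)) \<longlongrightarrow> L) (at_right 0)"
    using filterlim_at_right_to_0[THEN iffD1, OF right] by (simp add: add.commute)
  moreover have "((\<lambda>u. f (x - u)) \<longlongrightarrow> L) (at_right 0)"
    using filterlim_at_right_to_0[THEN iffD1, OF filterlim_at_left_to_right[THEN iffD1, OF left]]
    by simp
  ultimately have "((\<lambda>u. \<bar>f (x + u) + f (x - u) - 2 * f x\<bar>) \<longlongrightarrow> \<bar>L + L - 2 * f x\<bar>) (at_right 0)"
    by (intro tendsto_intros)
  moreover have "\<bar>L + L - 2 * f x\<bar> = 2 * c"
    unfolding c_def by (simp add: abs_if)
  ultimately have "((\<lambda>u. \<bar>f (x + u) + f (x - u) - 2 * f x\<bar>) \<longlongrightarrow> 2 * c) (at_right 0)"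
    by simp
  then have "eventually (\<lambda>u. c < \<bar>f (x + u) + f (x - u) - 2 * f x\<bar>) (at_right 0)"
    using \<open>0 < c\<close> by (intro order_tendstoD) auto
  then obtain \<eta> where "0 < \<eta>"
    and jump: "\<And>u. 0 < u \<Longrightarrow> u < \<eta> \<Longrightarrow> c < \<bar>f (x + u) + f (x - u) - 2 * f x\<bar>"
    unfolding eventually_at_right_field by auto
  have "set_integrable lborel {0<..<min \<delta> \<eta>} (\<lambda>u. c / u)"
  proof (rule set_integrable_bound)
    show "set_integrable lborel {0<..<min \<delta> \<eta>} (\<lambda>u. \<bar>f (x + u) + f (x - u) - 2 * f x\<bar> / u)"
      by (rule set_integrable_subset[OF dini]) auto
    show "set_borel_measurable lborel {0<..<min \<delta> \<eta>} (\<lambda>u. c / u)"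
      unfolding set_borel_measurable_def by measurable
    show "AE u in lborel. u \<in> {0<..<min \<delta> \<eta>} \<longrightarrow>
        norm (c / u) \<le> norm (\<bar>f (x + u) + f (x - u) - 2 * f x\<bar> / u)"
      using jump \<open>0 < c\<close> by (auto intro!: AE_I2 less_imp_le divide_strict_right_mono)
  qed
  then show False
    using not_set_integrable_const_divide[of "min \<delta> \<eta>" c] \<open>0 < \<delta>\<close> \<open>0 < \<eta>\<close> \<open>0 < c\<close> by simp
qed

lemma class_C_imp_isCont:
  assumes "class_C f" and "x \<in> \<rat>" and "0 < x" "x < 1"
  shows "isCont f x"
proof -
  obtain L \<delta> where L: "(f \<longlongrightarrow> L) (at_left x)" "(f \<longlongrightarrow> L) (at_right x)" and "0 < \<delta>"
    and "set_integrable lborel {0<..<\<delta>} (\<lambda>u. \<bar>f (x + u) + f (x - u) - 2 * f x\<bar> / u)"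
    using assms unfolding class_C_def by blast
  then have "f x = L"
    by (intro dini_condition_imp_no_jump)
  with L show ?thesis
    unfolding isCont_def by (simp add: filterlim_at_split)
qed

section \<open>Sampling at the points k/d\<close>

lemma exp_2pi_divide_eq_1_iff:
  assumes "d > 0"
  shows "exp (2 * pi * \<i> * of_int l / of_nat d) = 1 \<longleftrightarrow> int d dvd l"
proof -
  have "exp (2 * pi * \<i> * of_int l / of_nat d) = 1
      \<longleftrightarrow> (\<exists>n::int. 2 * pi * of_int l / real d = of_int (2 * n) * pi)"
    by (subst exp_eq_1) simp
  also have "\<dots> \<longleftrightarrow> (\<exists>n::int. real_of_int l = real d * of_int n)"
    using assms by (auto simp: field_simps)
  also have "\<dots> \<longleftrightarrow> int d dvd l"
    by (metis dvd_def of_int_eq_iff of_int_mult of_int_of_nat_eq)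
  finally show ?thesis .
qed

lemma sum_circle_char_roots_of_unity:
  assumes "d > 0"
  shows "(\<Sum>k=1..d. circle_char l (real k / real d)) = (if int d dvd l then of_nat d else 0)"
proof -
  define w where "w = exp (2 * pi * \<i> * of_int l / of_nat d)"
  have power: "circle_char l (real k / real d) = w ^ k" for k
  proof -
    have "2 * pi * \<i> * of_int l * of_real (real k / real d)
        = of_nat k * (2 * pi * \<i> * of_int l / of_nat d)"
      by simp
    then show ?thesis
      unfolding w_def by (simp only: exp_of_nat_mult)
  qed
  have "w ^ d = 1"
    unfolding w_def using assms by (simp flip: exp_of_nat_mult) (subst exp_eq_1, simp)
  have "(\<Sum>k=1..d. circle_char l (real k / real d)) = w * (\<Sum>i<d. w ^ i)"
    unfolding power using sum.atLeast1_atMost_eq[of "\<lambda>k. w ^ k" d] by (simp add: sum_distrib_left)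
  also have "\<dots> = (if int d dvd l then of_nat d else 0)"
  proof -
    have "w = 1 \<longleftrightarrow> int d dvd l"
      unfolding w_def by (rule exp_2pi_divide_eq_1_iff[OF assms])
    then show ?thesis
      using \<open>w ^ d = 1\<close> by (auto simp: geometric_sum)
  qed
  finally show ?thesis .
qed

lemma has_sum_sum:
  fixes g :: "'k \<Rightarrow> 'a \<Rightarrow> 'b::topological_comm_monoid_add"
  assumes "finite K" "\<And>k. k \<in> K \<Longrightarrow> (g k has_sum s k) A"
  shows "((\<lambda>x. \<Sum>k\<in>K. g k x) has_sum (\<Sum>k\<in>K. s k)) A"
  using assms by (induction K rule: finite_induct) (auto intro: has_sum_add)

lemma has_sum_multiples_of_sampled_series:
  fixes c :: "int \<Rightarrow> complex"
  assumes "d > 0"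
    and sample: "\<And>k. k \<in> {1..d} \<Longrightarrow>
      ((\<lambda>l. c l * circle_char l (real k / real d)) has_sum s k) UNIV"
  shows "((\<lambda>l. of_nat d * c l) has_sum (\<Sum>k=1..d. s k)) {l. int d dvd l}"
proof -
  have "((\<lambda>l. \<Sum>k=1..d. c l * circle_char l (real k / real d)) has_sum (\<Sum>k=1..d. s k)) UNIV"
    using sample by (intro has_sum_sum) auto
  moreover have "(\<Sum>k=1..d. c l * circle_char l (real k / real d))
      = (if int d dvd l then of_nat d * c l else 0)" for l
    unfolding sum_distrib_left[symmetric] sum_circle_char_roots_of_unity[OF assms(1)] by simp
  ultimately show ?thesis
    by (subst has_sum_cong_neutral[where T = UNIV]) auto
qed

lemma fourier_coeff_0: "fourier_coeff f 0 = complex_of_real (LINT x:{0..1}|lborel. f x)"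
  unfolding fourier_coeff_def by (simp add: set_integral_complex_of_real)

(* Class C says nothing about the point 1 = d/d, so there the series is kept as it is;
   this is why the theorem compares D~_f(d) - f(1) with the sum of the series. *)
lemma has_sum_fourier_series_at_fraction:
  fixes f :: "real \<Rightarrow> real"
  assumes f: "set_integrable lborel {0..1} f" and "class_C f"
    and abs_summable: "(\<lambda>l. norm (fourier_coeff f l)) summable_on UNIV"
    and k: "k \<in> {1..d}"
  shows "((\<lambda>l. fourier_coeff f l * circle_char l (real k / real d)) has_sum
           (if k = d then (\<Sum>\<^sub>\<infinity>l\<in>UNIV. fourier_coeff f l)
            else complex_of_real (f (real k / real d)))) UNIV"
proof (cases "k = d")
  case True
  have "circle_char l 1 = 1" for l
    by (subst exp_eq_1) auto
  moreover have "fourier_coeff f summable_on UNIV"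
    using abs_summable by (rule abs_summable_summable)
  ultimately show ?thesis
    using True k by (simp add: has_sum_infsum)
next
  case False
  then have x: "0 < real k / real d" "real k / real d < 1"
    using k by auto
  then have "isCont f (real k / real d)"
    using \<open>class_C f\<close> by (intro class_C_imp_isCont) auto
  from fourier_series_has_sum_at_isCont[OF f x this abs_summable] show ?thesis
    using False by simp
qed

lemma has_sum_multiples_split_0:
  fixes c :: "int \<Rightarrow> complex"
  assumes "c summable_on UNIV"
  shows "((\<lambda>l. of_nat d * c l) has_sum
           of_nat d * (c 0 + (\<Sum>\<^sub>\<infinity>l\<in>{l. l \<noteq> 0 \<and> int d dvd l}. c l))) {l. int d dvd l}"
proof -
  have summable: "c summable_on A" for A
    using assms by (rule summable_on_subset_banach) simp
  have "{l. int d dvd l} = insert 0 {l. l \<noteq> 0 \<and> int d dvd l}"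
    by auto
  then have "infsum c {l. int d dvd l} = c 0 + infsum c {l. l \<noteq> 0 \<and> int d dvd l}"
    using summable by (simp add: infsum_insert)
  then show ?thesis
    using has_sum_cmult_right[OF has_sum_infsum[OF summable[of "{l. int d dvd l}"]], of "of_nat d"]
    by simp
qed

lemma D_tilde_eq_sum_fourier_coeff_multiples:
  fixes f :: "real \<Rightarrow> real"
  assumes f: "set_integrable lborel {0..1} f" and "class_C f"
    and abs_summable: "(\<lambda>l. norm (fourier_coeff f l)) summable_on UNIV"
    and "d > 0"
  shows "complex_of_real (D_tilde f d - f 1) + (\<Sum>\<^sub>\<infinity>l\<in>UNIV. fourier_coeff f l)
       = of_nat d * (\<Sum>\<^sub>\<infinity>l\<in>{l. l \<noteq> 0 \<and> int d dvd l}. fourier_coeff f l)"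
proof -
  define c where "c = fourier_coeff f"
  define s where
    "s k = (if k = d then infsum c UNIV else complex_of_real (f (real k / real d)))" for k
  have "((\<lambda>l. of_nat d * c l) has_sum (\<Sum>k=1..d. s k)) {l. int d dvd l}"
    unfolding c_def s_def using has_sum_fourier_series_at_fraction[OF assms(1-3)]
    by (rule has_sum_multiples_of_sampled_series[OF \<open>d > 0\<close>])
  moreover have "((\<lambda>l. of_nat d * c l) has_sum
      of_nat d * (c 0 + infsum c {l. l \<noteq> 0 \<and> int d dvd l})) {l. int d dvd l}"
    unfolding c_def using abs_summable_summable[OF abs_summable] by (rule has_sum_multiples_split_0)
  ultimately have "(\<Sum>k=1..d. s k) = of_nat d * (c 0 + infsum c {l. l \<noteq> 0 \<and> int d dvd l})"
    by (rule has_sum_unique)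
  moreover have "(\<Sum>k=1..d. s k) = complex_of_real (D_sum f d - f 1) + infsum c UNIV"
  proof -
    obtain d' where d': "d = Suc d'"
      using \<open>d > 0\<close> gr0_implies_Suc by blast
    have "(\<Sum>k=1..d'. s k) = (\<Sum>k=1..d'. complex_of_real (f (real k / real d)))"
      by (intro sum.cong) (auto simp: s_def d')
    then show ?thesis
      by (simp add: D_sum_def d' sum.cl_ivl_Suc s_def)
  qed
  ultimately show ?thesis
    by (simp add: D_tilde_def c_def fourier_coeff_0 algebra_simps)
qed

section \<open>Summation over divisors\<close>

lemma finite_Suc_divisors:
  assumes "l \<noteq> 0"
  shows "finite {d::nat. int (Suc d) dvd l}"
proof (rule finite_subset)
  show "{d::nat. int (Suc d) dvd l} \<subseteq> {..nat \<bar>l\<bar>}"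
  proof
    fix d
    assume "d \<in> {d::nat. int (Suc d) dvd l}"
    then have "int (Suc d) \<le> \<bar>l\<bar>"
      using assms by (intro zdvd_imp_le) auto
    then show "d \<in> {..nat \<bar>l\<bar>}"
      by auto
  qed
qed simp

lemma card_Suc_divisors:
  assumes "l \<noteq> 0"
  shows "card {d::nat. int (Suc d) dvd l} = num_divisors l"
proof -
  have "bij_betw (\<lambda>d. int (Suc d)) {d::nat. int (Suc d) dvd l} {m::int. 0 < m \<and> m dvd \<bar>l\<bar>}"
  proof (rule bij_betw_imageI)
    show "(\<lambda>d. int (Suc d)) ` {d. int (Suc d) dvd l} = {m. 0 < m \<and> m dvd \<bar>l\<bar>}"
    proof (intro equalityI subsetI)
      fix m
      assume "m \<in> {m. 0 < m \<and> m dvd \<bar>l\<bar>}"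
      then have "m = int (Suc (nat (m - 1)))" "int (Suc (nat (m - 1))) dvd l"
        by auto
      then show "m \<in> (\<lambda>d. int (Suc d)) ` {d. int (Suc d) dvd l}"
        by blast
    qed auto
  qed (auto simp: inj_on_def)
  then show ?thesis
    unfolding num_divisors_def by (rule bij_betw_same_card)
qed

lemma num_divisors_pos:
  assumes "l \<noteq> 0"
  shows "num_divisors l > 0"
proof -
  have "0 \<in> {d::nat. int (Suc d) dvd l}"
    by simp
  then show ?thesis
    using finite_Suc_divisors[OF assms] card_Suc_divisors[OF assms] by (metis card_gt_0_iff empty_iff)
qed

lemma summable_on_of_divisor_weighted:
  fixes a :: "int \<Rightarrow> real"
  assumes "\<And>l. 0 \<le> a l" and "(\<lambda>l. a l * real (num_divisors l)) summable_on (UNIV - {0})"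
  shows "a summable_on (UNIV - {0})"
proof (rule summable_on_comparison_test[OF assms(2)])
  fix l :: int
  assume "l \<in> UNIV - {0}"
  then have "1 \<le> real (num_divisors l)"
    using num_divisors_pos[of l] by simp
  then show "a l \<le> a l * real (num_divisors l)"
    using assms(1)[of l] by (simp add: mult_le_cancel_left1)
qed (use assms(1) in simp)

lemma has_sum_sum_over_multiples:
  fixes a :: "int \<Rightarrow> real"
  assumes nonneg: "\<And>l. 0 \<le> a l"
    and weighted: "((\<lambda>l. a l * real (num_divisors l)) has_sum A) (UNIV - {0})"
  shows "((\<lambda>d. \<Sum>\<^sub>\<infinity>l\<in>{l. l \<noteq> 0 \<and> int (Suc d) dvd l}. a l) has_sum A) UNIV"
proof -
  define P where "P = Sigma (UNIV - {0}) (\<lambda>l. {d::nat. int (Suc d) dvd l})"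
  have inner: "((\<lambda>d. a l) has_sum a l * real (num_divisors l)) {d::nat. int (Suc d) dvd l}"
    if "l \<in> UNIV - {0}" for l
  proof -
    define S where "S = {d::nat. int (Suc d) dvd l}"
    have "l \<noteq> 0"
      using that by simp
    then have "finite S" "card S = num_divisors l"
      unfolding S_def by (rule finite_Suc_divisors, rule card_Suc_divisors)
    then show ?thesis
      unfolding S_def[symmetric] using has_sum_finite[of S "\<lambda>d. a l"] by (simp add: mult.commute)
  qed
  have "(\<lambda>(l, d). a l) summable_on P"
    unfolding P_def using inner weighted nonneg
    by (intro summable_on_SigmaI[where g = "\<lambda>l. a l * real (num_divisors l)"])
      (auto simp: has_sum_iff)
  then have "((\<lambda>(l, d). a l) has_sum A) P"
    unfolding P_def using inner weighted by (intro has_sum_SigmaI) auto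
  moreover have "bij_betw prod.swap (Sigma UNIV (\<lambda>d::nat. {l. l \<noteq> 0 \<and> int (Suc d) dvd l})) P"
    unfolding P_def by (rule bij_betwI[of _ _ _ prod.swap]) auto
  ultimately have
    "((\<lambda>(d, l). a l) has_sum A) (Sigma UNIV (\<lambda>d::nat. {l. l \<noteq> 0 \<and> int (Suc d) dvd l}))"
    by (simp add: case_prod_unfold flip: has_sum_reindex_bij_betw[of prod.swap])
  then show ?thesis
  proof (rule has_sum_Sigma')
    fix d :: nat
    have "a summable_on {l. l \<noteq> 0 \<and> int (Suc d) dvd l}"
      using summable_on_of_divisor_weighted[OF nonneg has_sum_imp_summable[OF weighted]]
      by (rule summable_on_subset_banach) auto
    then show "((\<lambda>l. (\<lambda>(d, l). a l) (d, l)) has_sum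
        (\<Sum>\<^sub>\<infinity>l\<in>{l. l \<noteq> 0 \<and> int (Suc d) dvd l}. a l)) {l. l \<noteq> 0 \<and> int (Suc d) dvd l}"
      by (simp add: has_sum_infsum)
  qed
qed

lemma summable_suminf_le_has_sum:
  fixes t b :: "nat \<Rightarrow> real"
  assumes "(b has_sum B) UNIV" and "\<And>d. 0 \<le> t d" and "\<And>d. t d \<le> b d"
  shows "summable t \<and> suminf t \<le> B"
proof -
  have "b sums B"
    using assms(1) by (rule has_sum_imp_sums)
  have "summable t"
  proof (rule summable_comparison_test')
    show "summable b"
      using \<open>b sums B\<close> by (simp add: sums_iff)
    show "norm (t d) \<le> b d" for d
      using assms(2,3) by simp
  qed
  moreover have "suminf t \<le> suminf b"
    using \<open>b sums B\<close> \<open>summable t\<close> assms(3) by (auto simp: sums_iff intro: suminf_le)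
  ultimately show ?thesis
    using \<open>b sums B\<close> by (simp add: sums_iff)
qed

theorem corollary3p2:
  fixes f :: "real \<Rightarrow> real" and A :: real
  assumes "set_integrable lborel {0..1} f"
    and "class_C f"
    and "(\<lambda>l. norm (fourier_coeff f l) * real (num_divisors l)) summable_on (UNIV - {0})"
    and "A = (\<Sum>\<^sub>\<infinity>l\<in>UNIV - {0}. norm (fourier_coeff f l) * real (num_divisors l))"
  shows "summable (\<lambda>d. (1 / real (Suc d)) *
            norm (complex_of_real (D_tilde f (Suc d) - f 1) + (\<Sum>\<^sub>\<infinity>l\<in>UNIV. fourier_coeff f l))) \<and>
         (\<Sum>d. (1 / real (Suc d)) *
            norm (complex_of_real (D_tilde f (Suc d) - f 1) + (\<Sum>\<^sub>\<infinity>l\<in>UNIV. fourier_coeff f l))) \<le> A"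
proof (rule summable_suminf_le_has_sum)
  show "((\<lambda>d. \<Sum>\<^sub>\<infinity>l\<in>{l. l \<noteq> 0 \<and> int (Suc d) dvd l}. norm (fourier_coeff f l)) has_sum A) UNIV"
    using assms(3,4) by (intro has_sum_sum_over_multiples) (simp_all add: has_sum_infsum)
  have "(\<lambda>l. norm (fourier_coeff f l)) summable_on (UNIV - {0})"
    by (rule summable_on_of_divisor_weighted[OF _ assms(3)]) simp
  then have abs_summable: "(\<lambda>l. norm (fourier_coeff f l)) summable_on UNIV"
    by (metis insert_UNIV insert_Diff_single summable_on_insert_iff)
  fix d
  have "norm (complex_of_real (D_tilde f (Suc d) - f 1) + (\<Sum>\<^sub>\<infinity>l\<in>UNIV. fourier_coeff f l))
      = real (Suc d) * norm (\<Sum>\<^sub>\<infinity>l\<in>{l. l \<noteq> 0 \<and> int (Suc d) dvd l}. fourier_coeff f l)"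
    unfolding D_tilde_eq_sum_fourier_coeff_multiples[OF assms(1,2) abs_summable zero_less_Suc]
    by (simp add: norm_mult del: of_nat_Suc)
  also have "\<dots> \<le> real (Suc d) * (\<Sum>\<^sub>\<infinity>l\<in>{l. l \<noteq> 0 \<and> int (Suc d) dvd l}. norm (fourier_coeff f l))"
  proof -
    have "(\<lambda>l. norm (fourier_coeff f l)) summable_on {l. l \<noteq> 0 \<and> int (Suc d) dvd l}"
      using abs_summable by (rule summable_on_subset_banach) auto
    then show ?thesis
      by (intro mult_left_mono norm_infsum_bound) auto
  qed
  finally show "1 / real (Suc d) * norm (complex_of_real (D_tilde f (Suc d) - f 1) + (\<Sum>\<^sub>\<infinity>l\<in>UNIV. fourier_coeff f l))
      \<le> (\<Sum>\<^sub>\<infinity>l\<in>{l. l \<noteq> 0 \<and> int (Suc d) dvd l}. norm (fourier_coeff f l))"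
    by (simp add: divide_le_eq mult.commute del: of_nat_Suc)
qed simp

end
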